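(* Let $G$ be a finite graph and let $\mathcal{V}=\{V_1,\ldots,V_n\}$ be a partition of $V(G)$; write $V_I=\bigcup_{i\in I}V_i$. Each of the following conditions is sufficient for $\mathbf{RG}(\mathcal{I}(G),\mathcal{V})$ to be connected: (a) $\tilde\gamma(G[V_I])\ge 2|I|+1$ for all nonempty $I\subseteq[n]$; (b) $i\gamma(G[V_I])\ge|I|+1$ for all nonempty $I\subseteq[n]$.
   Context: $\mathcal{I}(G)$ is the complex of independent sets of $G$. An independent transversal is an independent set of $G$ containing exactly one vertex from each $V_i$. $\mathbf{RG}(\mathcal{I}(G),\mathcal{V})$ is the graph on the independent transversals, two being adjacent if their union is an independent set of size $n+1$. A vertex set $X$ strongly dominates a vertex set $Y$ if every vertex of $Y$ is adjacent to some vertex of $X$. $\tilde\gamma(H)$ is the minimum size of a set strongly dominating $V(H)$; $i\gamma(H)$ is the minimum integer $\ell$ such that every independent set of $H$ is strongly dominated by some vertex set of size at most $\ell$ (these are $\infty$ if no such set/integer exists). *)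

theory Defs
  imports Main "HOL-Library.Extended_Nat"
begin

definition fin_graph :: "'a set \<Rightarrow> ('a \<Rightarrow> 'a \<Rightarrow> bool) \<Rightarrow> bool" where
  "fin_graph V E \<longleftrightarrow> finite V \<and> (\<forall>x y. E x y \<longrightarrow> x \<in> V \<and> y \<in> V)
     \<and> (\<forall>x y. E x y \<longrightarrow> E y x) \<and> (\<forall>x. \<not> E x x)"

definition is_partition :: "'a set \<Rightarrow> nat \<Rightarrow> (nat \<Rightarrow> 'a set) \<Rightarrow> bool" where
  "is_partition V n P \<longleftrightarrow> (\<Union>i<n. P i) = V \<and> (\<forall>i<n. P i \<noteq> {})
     \<and> (\<forall>i<n. \<forall>j<n. i \<noteq> j \<longrightarrow> P i \<inter> P j = {})"

definition parts_union :: "(nat \<Rightarrow> 'a set) \<Rightarrow> nat set \<Rightarrow> 'a set" where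
  "parts_union P I = (\<Union>i\<in>I. P i)"

definition indep_set :: "'a set \<Rightarrow> ('a \<Rightarrow> 'a \<Rightarrow> bool) \<Rightarrow> 'a set \<Rightarrow> bool" where
  "indep_set V E S \<longleftrightarrow> S \<subseteq> V \<and> (\<forall>x\<in>S. \<forall>y\<in>S. \<not> E x y)"

definition indep_transversal ::
  "'a set \<Rightarrow> ('a \<Rightarrow> 'a \<Rightarrow> bool) \<Rightarrow> nat \<Rightarrow> (nat \<Rightarrow> 'a set) \<Rightarrow> 'a set \<Rightarrow> bool" where
  "indep_transversal V E n P T \<longleftrightarrow> indep_set V E T \<and> T \<subseteq> (\<Union>i<n. P i)
     \<and> (\<forall>i<n. card (T \<inter> P i) = 1)"

definition RG_adj ::
  "'a set \<Rightarrow> ('a \<Rightarrow> 'a \<Rightarrow> bool) \<Rightarrow> nat \<Rightarrow> (nat \<Rightarrow> 'a set) \<Rightarrow> 'a set \<Rightarrow> 'a set \<Rightarrow> bool" where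
  "RG_adj V E n P T T' \<longleftrightarrow> indep_transversal V E n P T \<and> indep_transversal V E n P T'
     \<and> indep_set V E (T \<union> T') \<and> card (T \<union> T') = n + 1"

definition RG_connected ::
  "'a set \<Rightarrow> ('a \<Rightarrow> 'a \<Rightarrow> bool) \<Rightarrow> nat \<Rightarrow> (nat \<Rightarrow> 'a set) \<Rightarrow> bool" where
  "RG_connected V E n P \<longleftrightarrow> (\<forall>T T'. indep_transversal V E n P T \<and> indep_transversal V E n P T'
     \<longrightarrow> (RG_adj V E n P)\<^sup>*\<^sup>* T T')"

definition strongly_dominates :: "('a \<Rightarrow> 'a \<Rightarrow> bool) \<Rightarrow> 'a set \<Rightarrow> 'a set \<Rightarrow> bool" where
  "strongly_dominates E X Y \<longleftrightarrow> (\<forall>y\<in>Y. \<exists>x\<in>X. E x y)"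

text \<open>Graphs are given as (W, E) with induced subgraph on W, i.e. only edges
inside W count. tilde-gamma; infinity if no strongly dominating set exists.\<close>
definition tgamma :: "'a set \<Rightarrow> ('a \<Rightarrow> 'a \<Rightarrow> bool) \<Rightarrow> enat" where
  "tgamma W E = (INF X \<in> {X. X \<subseteq> W \<and> strongly_dominates (\<lambda>x y. x \<in> W \<and> y \<in> W \<and> E x y) X W}.
                    enat (card X))"

definition igamma :: "'a set \<Rightarrow> ('a \<Rightarrow> 'a \<Rightarrow> bool) \<Rightarrow> enat" where
  "igamma W E = (INF l \<in> {l::nat. \<forall>S. indep_set W E S \<longrightarrow>
        (\<exists>X. X \<subseteq> W \<and> card X \<le> l \<and> strongly_dominates (\<lambda>x y. x \<in> W \<and> y \<in> W \<and> E x y) X S)}.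
        enat l)"

end

(*
  Work over Z/2: a chain is a finite set of finite vertex sets, addition of chains is
  symmetric difference, and the boundary of a chain is the mod-2 sum of the facets of its
  members.

  Each of the two hypotheses makes the independence complex of every G[V_I] homologically
  (|I| - 1)-connected.  This follows Meshulam's recursion: a cycle of independent sets of G
  is first filled in G - uv; the part of that filling through the edge uv is a double cone
  u * v * C over a cycle C of G - N(u) - N(v), which is filled one dimension lower, and the
  repaired filling lives in G.  A graph with an isolated vertex is a cone.  Both domination
  bounds survive deleting an edge and, with the index lowered by one, passing to
  G - N(u) - N(v).

  Given independent transversals T and T', the connectivity yields chains d_J, for sets J of
  parts, of independent (|J| + 1)-sets of G[V_J] whose boundary is the sum of the d_(J - {i})
  for i in J plus the restrictions of T and T' to V_J; this right-hand side is a cycle,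
  which is why it can be filled.  Every independent (n + 1)-set has 0 or 2 facets in the
  component of T in RG, so the boundary of d_[n] meets that component in an even number of
  transversals.  But it meets the component exactly in T unless T' belongs to it.
*)
theory Submission
  imports Defs
begin

section \<open>Chains modulo 2\<close>

lemma odd_card_sym_diff:
  assumes "finite A" "finite B"
  shows "odd (card (sym_diff A B)) \<longleftrightarrow> odd (card A) \<noteq> odd (card B)"
proof -
  have "card (sym_diff A B) = card (A - B) + card (B - A)"
    by (rule card_Un_disjoint) (use assms in auto)
  moreover have "card (A - B) + card (A \<inter> B) = card A" "card (B - A) + card (A \<inter> B) = card B"
    using assms by (simp_all add: card_Diff_subset_Int card_mono Int_commute)
  ultimately have "card A + card B = card (sym_diff A B) + 2 * card (A \<inter> B)" by linarith
  then have "odd (card A + card B) \<longleftrightarrow> odd (card (sym_diff A B))"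
    by (metis even_add dvd_triv_left)
  then show ?thesis by simp
qed

text \<open>For infinite \<open>I\<close> all the counts are \<open>card\<close> of an infinite set, i.e. \<open>0\<close>, and the sum is empty.\<close>
definition sym_diff_sum :: "('i \<Rightarrow> 'b set) \<Rightarrow> 'i set \<Rightarrow> 'b set" where
  "sym_diff_sum f I = {x. odd (card {i\<in>I. x \<in> f i})}"

lemma sym_diff_sum_empty [simp]: "sym_diff_sum f {} = {}"
  unfolding sym_diff_sum_def by simp

lemma sym_diff_sum_insert:
  assumes "finite I" "i \<notin> I"
  shows "sym_diff_sum f (insert i I) = sym_diff (f i) (sym_diff_sum f I)"
proof -
  have "\<And>x. {j\<in>insert i I. x \<in> f j} = (if x \<in> f i then insert i {j\<in>I. x \<in> f j} else {j\<in>I. x \<in> f j})"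
    by auto
  then show ?thesis unfolding sym_diff_sum_def using assms by auto
qed

lemma sym_diff_sum_singleton [simp]: "sym_diff_sum f {i} = f i"
  using sym_diff_sum_insert[of "{}" i f] by auto

lemma sym_diff_sum_cong: "(\<And>i. i \<in> I \<Longrightarrow> f i = g i) \<Longrightarrow> sym_diff_sum f I = sym_diff_sum g I"
  unfolding sym_diff_sum_def by (metis (mono_tags, lifting) Collect_cong)

lemma sym_diff_sum_subset: "sym_diff_sum f I \<subseteq> \<Union> (f ` I)"
proof
  fix x assume "x \<in> sym_diff_sum f I"
  then have "{i\<in>I. x \<in> f i} \<noteq> {}" unfolding sym_diff_sum_def by (auto simp del: Collect_empty_eq)
  then show "x \<in> \<Union> (f ` I)" by blast
qed

lemma finite_sym_diff_sum: "finite I \<Longrightarrow> (\<And>i. i \<in> I \<Longrightarrow> finite (f i)) \<Longrightarrow> finite (sym_diff_sum f I)"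
  by (meson finite_UN_I finite_subset sym_diff_sum_subset)

lemma sym_diff_sum_sym_diff:
  assumes "finite I"
  shows "sym_diff_sum (\<lambda>i. sym_diff (f i) (g i)) I = sym_diff (sym_diff_sum f I) (sym_diff_sum g I)"
  using assms by (induction I rule: finite_induct) (auto simp: sym_diff_sum_insert)

lemma sym_diff_sum_sym_diff_index:
  assumes "finite A" "finite B"
  shows "sym_diff_sum f (sym_diff A B) = sym_diff (sym_diff_sum f A) (sym_diff_sum f B)"
proof (rule set_eqI)
  fix x
  have "{i\<in>sym_diff A B. x \<in> f i} = sym_diff {i\<in>A. x \<in> f i} {i\<in>B. x \<in> f i}" by blast
  moreover have "finite {i\<in>A. x \<in> f i}" "finite {i\<in>B. x \<in> f i}" using assms by simp_all
  ultimately have "odd (card {i\<in>sym_diff A B. x \<in> f i})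
      \<longleftrightarrow> odd (card {i\<in>A. x \<in> f i}) \<noteq> odd (card {i\<in>B. x \<in> f i})"
    by (simp only: odd_card_sym_diff)
  then show "x \<in> sym_diff_sum f (sym_diff A B) \<longleftrightarrow> x \<in> sym_diff (sym_diff_sum f A) (sym_diff_sum f B)"
    unfolding sym_diff_sum_def mem_Collect_eq Un_iff Diff_iff by fast
qed

lemma sym_diff_sum_reindex:
  assumes "inj_on g I"
  shows "sym_diff_sum f (g ` I) = sym_diff_sum (f \<circ> g) I"
proof (rule set_eqI)
  fix x
  have "{j\<in>g ` I. x \<in> f j} = g ` {i\<in>I. x \<in> (f \<circ> g) i}" by auto
  also have "card \<dots> = card {i\<in>I. x \<in> (f \<circ> g) i}"
    by (rule card_image, rule inj_on_subset[OF assms]) blast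
  finally have eq: "card {j\<in>g ` I. x \<in> f j} = card {i\<in>I. x \<in> (f \<circ> g) i}" .
  show "x \<in> sym_diff_sum f (g ` I) \<longleftrightarrow> x \<in> sym_diff_sum (f \<circ> g) I"
    unfolding sym_diff_sum_def mem_Collect_eq eq ..
qed

lemma sym_diff_sum_singletons:
  assumes "inj_on f I"
  shows "sym_diff_sum (\<lambda>i. {f i}) I = f ` I"
proof -
  have "sym_diff_sum (\<lambda>i. {f i}) I = sym_diff_sum (\<lambda>x. {x}) (f ` I)"
    using sym_diff_sum_reindex[OF assms, of "\<lambda>x. {x}"] by (simp only: comp_def)
  also have "\<dots> = f ` I"
  proof (rule set_eqI)
    fix x
    have "{y\<in>f ` I. x \<in> {y}} = (if x \<in> f ` I then {x} else {})" by auto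
    then show "x \<in> sym_diff_sum (\<lambda>x. {x}) (f ` I) \<longleftrightarrow> x \<in> f ` I"
      unfolding sym_diff_sum_def mem_Collect_eq by simp
  qed
  finally show ?thesis .
qed

text \<open>Every unordered pair \<open>{i, j}\<close> is counted twice: this is \<open>\<partial>\<partial> = 0\<close> for the chains \<open>d\<^sub>J\<close>.\<close>
lemma sym_diff_sum_symmetric_vanishes:
  assumes "finite A" "\<And>i j. h i j = h j i"
  shows "sym_diff_sum (\<lambda>i. sym_diff_sum (h i) (A - {i})) A = {}"
  using assms(1)
proof (induction A rule: finite_induct)
  case empty
  then show ?case by simp
next
  case (insert a A)
  have "sym_diff_sum (\<lambda>i. sym_diff_sum (h i) (insert a A - {i})) A
      = sym_diff_sum (\<lambda>i. sym_diff (h i a) (sym_diff_sum (h i) (A - {i}))) A"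
  proof (rule sym_diff_sum_cong)
    fix i assume "i \<in> A"
    then have "insert a A - {i} = insert a (A - {i})" using insert(2) by blast
    then show "sym_diff_sum (h i) (insert a A - {i}) = sym_diff (h i a) (sym_diff_sum (h i) (A - {i}))"
      using insert(1,2) by (simp add: sym_diff_sum_insert)
  qed
  also have "\<dots> = sym_diff (sym_diff_sum (\<lambda>i. h i a) A) (sym_diff_sum (\<lambda>i. sym_diff_sum (h i) (A - {i})) A)"
    using insert(1) by (rule sym_diff_sum_sym_diff)
  also have "sym_diff_sum (\<lambda>i. h i a) A = sym_diff_sum (h a) A"
    using assms(2) by metis
  finally have "sym_diff_sum (\<lambda>i. sym_diff_sum (h i) (insert a A - {i})) A = sym_diff_sum (h a) A"
    unfolding insert.IH by blast
  moreover have "insert a A - {a} = A" using insert(2) by blast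
  ultimately show ?case using insert(1,2) by (simp add: sym_diff_sum_insert)
qed

definition facets :: "'a set \<Rightarrow> 'a set set" where
  "facets \<sigma> = (\<lambda>x. \<sigma> - {x}) ` \<sigma>"

definition boundary :: "'a set set \<Rightarrow> 'a set set" where
  "boundary c = sym_diff_sum facets c"

definition cone :: "'a \<Rightarrow> 'a set set \<Rightarrow> 'a set set" where
  "cone w c = insert w ` c"

lemma boundary_empty [simp]: "boundary {} = {}"
  unfolding boundary_def by simp

lemma boundary_singleton [simp]: "boundary {\<sigma>} = facets \<sigma>"
  unfolding boundary_def by simp

lemma boundary_sym_diff:
  "finite a \<Longrightarrow> finite b \<Longrightarrow> boundary (sym_diff a b) = sym_diff (boundary a) (boundary b)"
  unfolding boundary_def by (rule sym_diff_sum_sym_diff_index)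

lemma mem_boundaryD: "\<tau> \<in> boundary c \<Longrightarrow> \<exists>\<sigma>\<in>c. \<exists>x\<in>\<sigma>. \<tau> = \<sigma> - {x}"
  unfolding boundary_def using sym_diff_sum_subset[of facets c] unfolding facets_def by blast

lemma boundary_sym_diff_sum:
  assumes "finite I" "\<And>i. i \<in> I \<Longrightarrow> finite (f i)"
  shows "boundary (sym_diff_sum f I) = sym_diff_sum (\<lambda>i. boundary (f i)) I"
  using assms
proof (induction I rule: finite_induct)
  case empty
  then show ?case by simp
next
  case (insert i I)
  then have "finite (sym_diff_sum f I)" by (intro finite_sym_diff_sum) auto
  with insert show ?case by (simp add: sym_diff_sum_insert boundary_sym_diff)
qed

lemma finite_cone [simp]: "finite c \<Longrightarrow> finite (cone w c)"
  unfolding cone_def by simp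

lemma cone_empty [simp]: "cone w {} = {}"
  unfolding cone_def by simp

lemma mem_cone:
  assumes "\<And>\<sigma>. \<sigma> \<in> c \<Longrightarrow> w \<notin> \<sigma>"
  shows "\<rho> \<in> cone w c \<longleftrightarrow> w \<in> \<rho> \<and> \<rho> - {w} \<in> c"
proof
  assume "\<rho> \<in> cone w c"
  then obtain \<sigma> where "\<sigma> \<in> c" "\<rho> = insert w \<sigma>" unfolding cone_def by blast
  then show "w \<in> \<rho> \<and> \<rho> - {w} \<in> c" using assms by simp
next
  assume "w \<in> \<rho> \<and> \<rho> - {w} \<in> c"
  then show "\<rho> \<in> cone w c" unfolding cone_def by (metis image_eqI insert_Diff)
qed

lemma cone_image_Diff:
  assumes "\<And>\<sigma>. \<sigma> \<in> c \<Longrightarrow> w \<in> \<sigma>"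
  shows "cone w ((\<lambda>\<sigma>. \<sigma> - {w}) ` c) = c"
  unfolding cone_def image_image using assms by (simp add: insert_absorb)

lemma cone_sym_diff:
  assumes "\<And>\<sigma>. \<sigma> \<in> a \<union> b \<Longrightarrow> w \<notin> \<sigma>"
  shows "cone w (sym_diff a b) = sym_diff (cone w a) (cone w b)"
proof (rule set_eqI)
  fix \<rho>
  have "\<rho> \<in> cone w (sym_diff a b) \<longleftrightarrow> w \<in> \<rho> \<and> \<rho> - {w} \<in> sym_diff a b"
    by (rule mem_cone) (use assms in blast)
  moreover have "\<rho> \<in> cone w a \<longleftrightarrow> w \<in> \<rho> \<and> \<rho> - {w} \<in> a" "\<rho> \<in> cone w b \<longleftrightarrow> w \<in> \<rho> \<and> \<rho> - {w} \<in> b"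
    by (rule mem_cone, use assms in blast)+
  ultimately show "\<rho> \<in> cone w (sym_diff a b) \<longleftrightarrow> \<rho> \<in> sym_diff (cone w a) (cone w b)"
    by blast
qed

lemma cone_sym_diff_sum:
  assumes "\<And>i \<sigma>. i \<in> I \<Longrightarrow> \<sigma> \<in> f i \<Longrightarrow> w \<notin> \<sigma>"
  shows "cone w (sym_diff_sum f I) = sym_diff_sum (\<lambda>i. cone w (f i)) I"
proof (rule set_eqI)
  fix \<rho>
  have "\<rho> \<in> cone w (f i) \<longleftrightarrow> w \<in> \<rho> \<and> \<rho> - {w} \<in> f i" if "i \<in> I" for i
    by (rule mem_cone) (use assms that in blast)
  then have eq: "{i\<in>I. \<rho> \<in> cone w (f i)} = (if w \<in> \<rho> then {i\<in>I. \<rho> - {w} \<in> f i} else {})"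
    by auto
  have "\<rho> \<in> cone w (sym_diff_sum f I) \<longleftrightarrow> w \<in> \<rho> \<and> \<rho> - {w} \<in> sym_diff_sum f I"
    by (rule mem_cone) (use assms sym_diff_sum_subset in fast)
  also have "\<dots> \<longleftrightarrow> w \<in> \<rho> \<and> odd (card {i\<in>I. \<rho> - {w} \<in> f i})"
    unfolding sym_diff_sum_def by simp
  also have "\<dots> \<longleftrightarrow> odd (card {i\<in>I. \<rho> \<in> cone w (f i)})"
    unfolding eq by simp
  also have "\<dots> \<longleftrightarrow> \<rho> \<in> sym_diff_sum (\<lambda>i. cone w (f i)) I"
    unfolding sym_diff_sum_def by simp
  finally show "\<rho> \<in> cone w (sym_diff_sum f I) \<longleftrightarrow> \<rho> \<in> sym_diff_sum (\<lambda>i. cone w (f i)) I" .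
qed

lemma facets_insert:
  assumes "w \<notin> \<sigma>"
  shows "facets (insert w \<sigma>) = sym_diff {\<sigma>} (cone w (facets \<sigma>))"
  using assms unfolding facets_def cone_def by (auto simp: image_iff insert_Diff_if)

lemma boundary_cone:
  assumes "finite c" "\<And>\<sigma>. \<sigma> \<in> c \<Longrightarrow> w \<notin> \<sigma>"
  shows "boundary (cone w c) = sym_diff c (cone w (boundary c))"
proof -
  have "inj_on (insert w) c" using assms(2) by (meson inj_onI insert_ident)
  then have "boundary (cone w c) = sym_diff_sum (facets \<circ> insert w) c"
    unfolding boundary_def cone_def by (rule sym_diff_sum_reindex)
  also have "\<dots> = sym_diff_sum (\<lambda>\<sigma>. sym_diff {\<sigma>} (cone w (facets \<sigma>))) c"
    by (rule sym_diff_sum_cong) (simp add: facets_insert assms(2))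
  also have "\<dots> = sym_diff (sym_diff_sum (\<lambda>\<sigma>. {\<sigma>}) c) (sym_diff_sum (\<lambda>\<sigma>. cone w (facets \<sigma>)) c)"
    using assms(1) by (rule sym_diff_sum_sym_diff)
  also have "sym_diff_sum (\<lambda>\<sigma>. {\<sigma>}) c = c"
    using sym_diff_sum_singletons[of "\<lambda>\<sigma>. \<sigma>" c] by simp
  also have "sym_diff_sum (\<lambda>\<sigma>. cone w (facets \<sigma>)) c = cone w (boundary c)"
    unfolding boundary_def using assms(2)
    by (intro cone_sym_diff_sum[symmetric]) (auto simp: facets_def)
  finally show ?thesis .
qed

section \<open>Acyclic independence complexes\<close>

definition indep_chain :: "'a set \<Rightarrow> ('a \<Rightarrow> 'a \<Rightarrow> bool) \<Rightarrow> nat \<Rightarrow> 'a set set \<Rightarrow> bool" where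
  "indep_chain W E k c \<longleftrightarrow> finite c \<and> (\<forall>\<sigma>\<in>c. indep_set W E \<sigma> \<and> card \<sigma> = k)"

text \<open>A \<open>k\<close>-set is a \<open>(k - 1)\<close>-simplex and the empty set is a face, so this says that the
  reduced Z/2-homology of \<open>I(G[W])\<close> vanishes in all dimensions below \<open>m\<close>.\<close>
definition indep_acyclic :: "'a set \<Rightarrow> ('a \<Rightarrow> 'a \<Rightarrow> bool) \<Rightarrow> nat \<Rightarrow> bool" where
  "indep_acyclic W E m \<longleftrightarrow> (\<forall>k\<le>m. \<forall>z. indep_chain W E k z \<and> boundary z = {} \<longrightarrow>
     (\<exists>b. indep_chain W E (Suc k) b \<and> boundary b = z))"

lemma indep_acyclicD:
  assumes "indep_acyclic W E m" "k \<le> m" "indep_chain W E k z" "boundary z = {}"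
  obtains b where "indep_chain W E (Suc k) b" "boundary b = z"
  using assms unfolding indep_acyclic_def by blast

lemma indep_chain_empty [simp]: "indep_chain W E k {}"
  unfolding indep_chain_def by simp

lemma indep_chain_sym_diff:
  "indep_chain W E k a \<Longrightarrow> indep_chain W E k b \<Longrightarrow> indep_chain W E k (sym_diff a b)"
  unfolding indep_chain_def by auto

lemma indep_set_mono:
  "indep_set W E \<sigma> \<Longrightarrow> W \<subseteq> W' \<Longrightarrow> (\<And>x y. E' x y \<Longrightarrow> E x y) \<Longrightarrow> indep_set W' E' \<sigma>"
  unfolding indep_set_def by blast

lemma indep_chain_mono:
  "indep_chain W E k c \<Longrightarrow> W \<subseteq> W' \<Longrightarrow> (\<And>x y. E' x y \<Longrightarrow> E x y) \<Longrightarrow> indep_chain W' E' k c"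
  unfolding indep_chain_def by (meson indep_set_mono)

lemma indep_set_insert:
  "indep_set W E (insert w \<sigma>) \<longleftrightarrow>
     w \<in> W \<and> \<not> E w w \<and> (\<forall>y\<in>\<sigma>. \<not> E w y \<and> \<not> E y w) \<and> indep_set W E \<sigma>"
  unfolding indep_set_def by blast

lemma indep_chain_cone:
  assumes "indep_chain W' E k c" "finite W" "W' \<subseteq> W" "w \<in> W - W'" "\<not> E w w"
    and "\<And>y. y \<in> W' \<Longrightarrow> \<not> E w y \<and> \<not> E y w"
  shows "indep_chain W E (Suc k) (cone w c)"
proof -
  have "indep_set W E (insert w \<sigma>) \<and> card (insert w \<sigma>) = Suc k" if "\<sigma> \<in> c" for \<sigma>
  proof -
    have "indep_set W' E \<sigma>" "card \<sigma> = k" using assms(1) that unfolding indep_chain_def by auto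
    moreover have "\<sigma> \<subseteq> W'" "finite \<sigma>"
      using calculation assms(2,3) unfolding indep_set_def by (auto intro: finite_subset)
    ultimately show ?thesis
      using assms(3-6) by (auto simp: indep_set_insert card_insert_if intro: indep_set_mono)
  qed
  then show ?thesis using assms(1) unfolding indep_chain_def cone_def by auto
qed

lemma indep_acyclic_isolated:
  assumes "finite W" "w \<in> W" "\<And>y. y \<in> W \<Longrightarrow> \<not> E w y \<and> \<not> E y w"
  shows "indep_acyclic W E m"
  unfolding indep_acyclic_def
proof (intro allI impI)
  fix k z assume "k \<le> m" and z: "indep_chain W E k z \<and> boundary z = {}"
  define z0 where "z0 = {\<sigma>\<in>z. w \<notin> \<sigma>}"
  define z1 where "z1 = (\<lambda>\<sigma>. \<sigma> - {w}) ` {\<sigma>\<in>z. w \<in> \<sigma>}"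
  have fin: "finite z0" "finite z1" using z unfolding z0_def z1_def indep_chain_def by auto
  have z0w: "\<And>\<sigma>. \<sigma> \<in> z0 \<Longrightarrow> w \<notin> \<sigma>" and z1w: "\<And>\<sigma>. \<sigma> \<in> z1 \<Longrightarrow> w \<notin> \<sigma>"
    unfolding z0_def z1_def by auto
  have "cone w z1 = {\<sigma>\<in>z. w \<in> \<sigma>}" unfolding z1_def by (rule cone_image_Diff) simp
  then have z_split: "z = sym_diff z0 (cone w z1)" unfolding z0_def by blast
  then have "sym_diff (boundary z0) (sym_diff z1 (cone w (boundary z1))) = {}"
    using z fin z1w by (simp add: boundary_sym_diff boundary_cone)
  moreover have "\<And>\<tau>. \<tau> \<in> boundary z0 \<Longrightarrow> w \<notin> \<tau>" using z0w by (fastforce dest: mem_boundaryD)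
  moreover have "\<And>\<tau>. \<tau> \<in> cone w (boundary z1) \<Longrightarrow> w \<in> \<tau>" unfolding cone_def by blast
  ultimately have bd_z0: "boundary z0 = z1" using z1w by blast
  have "indep_chain (W - {w}) E k z0"
    using z z0w unfolding z0_def indep_chain_def indep_set_def by auto
  then have "indep_chain W E (Suc k) (cone w z0)"
    by (rule indep_chain_cone) (use assms in auto)
  moreover have "boundary (cone w z0) = z"
    using fin z0w z_split by (simp add: boundary_cone bd_z0)
  ultimately show "\<exists>b. indep_chain W E (Suc k) b \<and> boundary b = z" by blast
qed

definition delete_edge :: "('a \<Rightarrow> 'a \<Rightarrow> bool) \<Rightarrow> 'a \<Rightarrow> 'a \<Rightarrow> 'a \<Rightarrow> 'a \<Rightarrow> bool" where
  "delete_edge E u v x y \<longleftrightarrow> E x y \<and> {x, y} \<noteq> {u, v}"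

lemma delete_edgeD: "delete_edge E u v x y \<Longrightarrow> E x y"
  unfolding delete_edge_def by simp

lemma symp_delete_edge: "symp E \<Longrightarrow> symp (delete_edge E u v)"
  unfolding delete_edge_def symp_def by (auto simp: insert_commute)

lemma irreflp_delete_edge: "irreflp E \<Longrightarrow> irreflp (delete_edge E u v)"
  unfolding delete_edge_def irreflp_def by simp

lemma indep_set_delete_edge:
  assumes "indep_set W (delete_edge E u v) \<sigma>" "\<not> (u \<in> \<sigma> \<and> v \<in> \<sigma>)"
  shows "indep_set W E \<sigma>"
  using assms unfolding indep_set_def delete_edge_def by (metis doubleton_eq_iff)

lemma indep_chain_delete_edge_Diff:
  assumes "finite W" "u \<noteq> v" "indep_chain W (delete_edge E u v) (Suc (Suc j)) c"
    and "\<And>\<sigma>. \<sigma> \<in> c \<Longrightarrow> u \<in> \<sigma> \<and> v \<in> \<sigma>"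
  shows "indep_chain {x\<in>W. \<not> E u x \<and> \<not> E v x} E j ((\<lambda>\<sigma>. \<sigma> - {u} - {v}) ` c)"
proof -
  have "indep_set {x\<in>W. \<not> E u x \<and> \<not> E v x} E (\<sigma> - {u} - {v}) \<and> card (\<sigma> - {u} - {v}) = j"
    if "\<sigma> \<in> c" for \<sigma>
  proof -
    have \<sigma>: "indep_set W (delete_edge E u v) \<sigma>" "card \<sigma> = Suc (Suc j)" "u \<in> \<sigma>" "v \<in> \<sigma>"
      using assms(3,4) that unfolding indep_chain_def by auto
    then have "finite \<sigma>" using assms(1) unfolding indep_set_def by (auto intro: finite_subset)
    moreover have "indep_set {x\<in>W. \<not> E u x \<and> \<not> E v x} E (\<sigma> - {u} - {v})"
      using \<sigma> unfolding indep_set_def delete_edge_def by (auto simp: doubleton_eq_iff)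
    ultimately show ?thesis using \<sigma> assms(2) by simp
  qed
  then show ?thesis using assms(3) unfolding indep_chain_def by blast
qed

lemma cone_cone_image_Diff:
  assumes "u \<noteq> v" "\<And>\<sigma>. \<sigma> \<in> c \<Longrightarrow> u \<in> \<sigma> \<and> v \<in> \<sigma>"
  shows "cone u (cone v ((\<lambda>\<sigma>. \<sigma> - {u} - {v}) ` c)) = c"
proof -
  have "(\<lambda>\<sigma>. \<sigma> - {u} - {v}) ` c = (\<lambda>\<sigma>. \<sigma> - {v}) ` ((\<lambda>\<sigma>. \<sigma> - {u}) ` c)" by (simp add: image_image)
  also have "cone v \<dots> = (\<lambda>\<sigma>. \<sigma> - {u}) ` c"
    by (rule cone_image_Diff) (use assms in auto)
  also have "cone u \<dots> = c" by (rule cone_image_Diff) (simp add: assms(2))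
  finally show ?thesis .
qed

lemma boundary_cone_cone:
  assumes "finite C" "u \<noteq> v" "\<And>\<tau>. \<tau> \<in> C \<Longrightarrow> u \<notin> \<tau> \<and> v \<notin> \<tau>"
  shows "boundary (cone u (cone v C))
    = sym_diff (cone v C) (sym_diff (cone u C) (cone u (cone v (boundary C))))"
proof -
  have "\<And>\<sigma>. \<sigma> \<in> cone v C \<Longrightarrow> u \<notin> \<sigma>" using assms(2,3) unfolding cone_def by auto
  then have "boundary (cone u (cone v C)) = sym_diff (cone v C) (cone u (boundary (cone v C)))"
    using assms(1) by (simp add: boundary_cone)
  also have "boundary (cone v C) = sym_diff C (cone v (boundary C))"
    using assms by (simp add: boundary_cone)
  also have "cone u \<dots> = sym_diff (cone u C) (cone u (cone v (boundary C)))"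
    using assms(2,3) by (intro cone_sym_diff) (auto simp: cone_def dest: mem_boundaryD)
  finally show ?thesis .
qed

text \<open>\<open>b\<^sub>1\<close> is the part of \<open>b\<close> avoiding the edge \<open>uv\<close> and \<open>u * v * C\<close> the rest. Only the term
  \<open>u * v * \<partial>C\<close> of \<open>\<partial>b\<close> has faces through \<open>uv\<close>, which forces \<open>\<partial>C = 0\<close>.\<close>
lemma delete_edge_chain_decompose:
  assumes W: "finite W" and "u \<noteq> v"
    and b: "indep_chain W (delete_edge E u v) (Suc (Suc j)) b"
    and bd_b: "\<And>\<tau>. \<tau> \<in> boundary b \<Longrightarrow> \<not> (u \<in> \<tau> \<and> v \<in> \<tau>)"
  obtains b1 C where "indep_chain W E (Suc (Suc j)) b1"
    "indep_chain {x\<in>W. \<not> E u x \<and> \<not> E v x} E j C" "boundary C = {}"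
    "boundary b = sym_diff (boundary b1) (sym_diff (cone u C) (cone v C))"
proof -
  define b2 where "b2 = {\<sigma>\<in>b. u \<in> \<sigma> \<and> v \<in> \<sigma>}"
  define b1 where "b1 = b - b2"
  define C where "C = (\<lambda>\<sigma>. \<sigma> - {u} - {v}) ` b2"
  have fin: "finite b1" "finite b2" "finite C"
    using b unfolding b1_def b2_def C_def indep_chain_def by auto
  have C_uv: "\<And>\<tau>. \<tau> \<in> C \<Longrightarrow> u \<notin> \<tau> \<and> v \<notin> \<tau>" unfolding C_def by blast
  have bd_b_split: "boundary b = sym_diff (boundary b1)
      (sym_diff (cone v C) (sym_diff (cone u C) (cone u (cone v (boundary C)))))"
  proof -
    have "b = sym_diff b1 (cone u (cone v C))"
      unfolding C_def using cone_cone_image_Diff[OF \<open>u \<noteq> v\<close>, of b2] unfolding b1_def b2_def by auto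
    then show ?thesis using fin C_uv \<open>u \<noteq> v\<close> by (simp add: boundary_sym_diff boundary_cone_cone)
  qed
  have "indep_chain W E (Suc (Suc j)) b1"
    using b unfolding indep_chain_def b1_def b2_def by (auto intro: indep_set_delete_edge)
  moreover have "indep_chain {x\<in>W. \<not> E u x \<and> \<not> E v x} E j C"
    unfolding C_def
  proof (rule indep_chain_delete_edge_Diff[OF W \<open>u \<noteq> v\<close>])
    show "indep_chain W (delete_edge E u v) (Suc (Suc j)) b2"
      using b unfolding b2_def indep_chain_def by auto
  qed (simp add: b2_def)
  moreover have "boundary C = {}"
  proof (rule ccontr)
    assume "boundary C \<noteq> {}"
    then obtain \<tau> where "\<tau> \<in> boundary C" by blast
    then have "insert u (insert v \<tau>) \<in> cone u (cone v (boundary C))" unfolding cone_def by blast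
    moreover have "insert u (insert v \<tau>) \<notin> boundary b1"
      unfolding b1_def b2_def by (fastforce dest: mem_boundaryD)
    moreover have "\<forall>\<rho> \<in> cone u C \<union> cone v C. \<not> (u \<in> \<rho> \<and> v \<in> \<rho>)"
      using C_uv \<open>u \<noteq> v\<close> unfolding cone_def by auto
    ultimately have "insert u (insert v \<tau>) \<in> boundary b" unfolding bd_b_split by blast
    then show False using bd_b by blast
  qed
  moreover from this have "boundary b = sym_diff (boundary b1) (sym_diff (cone u C) (cone v C))"
    unfolding bd_b_split by auto
  ultimately show ?thesis using that by blast
qed

lemma delete_edge_chain_repair:
  assumes W: "finite W" and E: "symp E" "irreflp E" and uv: "u \<in> W" "v \<in> W" "E u v"
    and b1: "indep_chain W E (Suc k) b1"
    and D: "indep_chain {x\<in>W. \<not> E u x \<and> \<not> E v x} E k D"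
  shows "indep_chain W E (Suc k) (sym_diff b1 (sym_diff (cone u D) (cone v D)))"
    and "boundary (sym_diff b1 (sym_diff (cone u D) (cone v D)))
      = sym_diff (boundary b1) (sym_diff (cone u (boundary D)) (cone v (boundary D)))"
proof -
  let ?W' = "{x\<in>W. \<not> E u x \<and> \<not> E v x}"
  have W': "?W' \<subseteq> W" "u \<in> W - ?W'" "v \<in> W - ?W'"
    using uv E(1) by (auto dest: sympD)
  have "indep_chain W E (Suc k) (cone w D)" if "w = u \<or> w = v" for w
  proof -
    have "w \<in> W - ?W'" "\<not> E w w" using that W' E(2) by (auto simp: irreflp_def)
    moreover have "\<And>y. y \<in> ?W' \<Longrightarrow> \<not> E w y \<and> \<not> E y w" using that E(1) by (auto dest: sympD)
    ultimately show ?thesis using indep_chain_cone[OF D W W'(1)] by simp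
  qed
  then show "indep_chain W E (Suc k) (sym_diff b1 (sym_diff (cone u D) (cone v D)))"
    using b1 by (simp add: indep_chain_sym_diff)
  have D_uv: "u \<notin> \<sigma> \<and> v \<notin> \<sigma>" if "\<sigma> \<in> D" for \<sigma>
  proof -
    have "\<sigma> \<subseteq> ?W'" using D that unfolding indep_chain_def indep_set_def by blast
    then show ?thesis using W'(2,3) by blast
  qed
  have "finite b1" "finite D" using b1 D unfolding indep_chain_def by auto
  then have "boundary (sym_diff b1 (sym_diff (cone u D) (cone v D)))
      = sym_diff (boundary b1) (sym_diff (sym_diff D (cone u (boundary D))) (sym_diff D (cone v (boundary D))))"
    using D_uv by (simp add: boundary_sym_diff boundary_cone)
  then show "boundary (sym_diff b1 (sym_diff (cone u D) (cone v D)))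
      = sym_diff (boundary b1) (sym_diff (cone u (boundary D)) (cone v (boundary D)))"
    by blast
qed

lemma indep_acyclic_edge:
  assumes W: "finite W" and E: "symp E" "irreflp E" and uv: "u \<in> W" "v \<in> W" "E u v"
    and del: "indep_acyclic W (delete_edge E u v) m"
    and contract: "0 < m \<Longrightarrow> indep_acyclic {x\<in>W. \<not> E u x \<and> \<not> E v x} E (m - 1)"
  shows "indep_acyclic W E m"
  unfolding indep_acyclic_def
proof (intro allI impI)
  fix k z assume k: "k \<le> m" and z: "indep_chain W E k z \<and> boundary z = {}"
  have "u \<noteq> v" using uv(3) E(2) by (auto simp: irreflp_def)
  have "indep_chain W (delete_edge E u v) k z" using z by (auto intro: indep_chain_mono delete_edgeD)
  then obtain b where b: "indep_chain W (delete_edge E u v) (Suc k) b" "boundary b = z"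
    using del k z by (elim indep_acyclicD) auto
  show "\<exists>b. indep_chain W E (Suc k) b \<and> boundary b = z"
  proof (cases k)
    case 0
    have "\<not> (u \<in> \<sigma> \<and> v \<in> \<sigma>)" if "card \<sigma> = 1" for \<sigma>
      using that \<open>u \<noteq> v\<close> by (auto simp: card_Suc_eq)
    then have "indep_chain W E (Suc k) b"
      using b(1) unfolding indep_chain_def 0 by (auto intro: indep_set_delete_edge)
    then show ?thesis using b(2) by blast
  next
    case (Suc j)
    have "\<And>\<tau>. \<tau> \<in> boundary b \<Longrightarrow> \<not> (u \<in> \<tau> \<and> v \<in> \<tau>)"
      using z b(2) uv(3) unfolding indep_chain_def indep_set_def by blast
    from delete_edge_chain_decompose[OF W \<open>u \<noteq> v\<close> b(1)[unfolded Suc] this]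
    obtain b1 C where b1: "indep_chain W E (Suc k) b1"
      and C: "indep_chain {x\<in>W. \<not> E u x \<and> \<not> E v x} E j C" "boundary C = {}"
      and bd_b: "boundary b = sym_diff (boundary b1) (sym_diff (cone u C) (cone v C))"
      unfolding Suc by blast
    have "indep_acyclic {x\<in>W. \<not> E u x \<and> \<not> E v x} E (m - 1)" using contract k Suc by simp
    then obtain D where D: "indep_chain {x\<in>W. \<not> E u x \<and> \<not> E v x} E k D" "boundary D = C"
      using C k Suc by (elim indep_acyclicD) auto
    show ?thesis
      using delete_edge_chain_repair[OF W E uv b1 D(1)] b(2) bd_b D(2) by blast
  qed
qed

definition edge_count :: "'a set \<Rightarrow> ('a \<Rightarrow> 'a \<Rightarrow> bool) \<Rightarrow> nat" where
  "edge_count W E = card {(x, y) \<in> W \<times> W. E x y}"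

lemma edge_count_less:
  assumes "finite W" "W' \<subseteq> W" "\<And>x y. E' x y \<Longrightarrow> E x y"
    and "u \<in> W" "v \<in> W" "E u v" "\<not> (u \<in> W' \<and> v \<in> W' \<and> E' u v)"
  shows "edge_count W' E' < edge_count W E"
  unfolding edge_count_def
proof (rule psubset_card_mono)
  show "finite {(x, y) \<in> W \<times> W. E x y}" using assms(1) by (auto intro: finite_subset)
  show "{(x, y) \<in> W' \<times> W'. E' x y} \<subset> {(x, y) \<in> W \<times> W. E x y}"
    using assms(2-7) by blast
qed

text \<open>Induction on the number of edges, driven by Meshulam's recursion; when \<open>w\<close> is isolated
  the complex is a cone.\<close>
lemma indep_acyclic_induct:
  assumes "Q W E m" "finite W" "symp E" "irreflp E"
    and step: "\<And>W E m. Q W E m \<Longrightarrow> finite W \<Longrightarrow> symp E \<Longrightarrow> irreflp E \<Longrightarrow>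
      \<exists>w\<in>W. \<forall>v\<in>W. E w v \<longrightarrow>
        Q W (delete_edge E w v) m \<and> (0 < m \<longrightarrow> Q {x\<in>W. \<not> E w x \<and> \<not> E v x} E (m - 1))"
  shows "indep_acyclic W E m"
  using assms(1-4)
proof (induction "edge_count W E" arbitrary: W E m rule: less_induct)
  case less
  note IH = less.hyps and W = less.prems(2) and E = less.prems(3,4)
  obtain w where w: "w \<in> W" and edges: "\<forall>v\<in>W. E w v \<longrightarrow>
      Q W (delete_edge E w v) m \<and> (0 < m \<longrightarrow> Q {x\<in>W. \<not> E w x \<and> \<not> E v x} E (m - 1))"
    using step[OF less.prems] by blast
  show ?case
  proof (cases "\<exists>v\<in>W. E w v")
    case False
    then show ?thesis using indep_acyclic_isolated[OF W w] E(1) by (metis sympD)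
  next
    case True
    then obtain v where v: "v \<in> W" "E w v" by blast
    show ?thesis
    proof (rule indep_acyclic_edge[OF W E w v])
      have "edge_count W (delete_edge E w v) < edge_count W E"
        using W w v by (intro edge_count_less) (auto simp: delete_edge_def)
      then show "indep_acyclic W (delete_edge E w v) m"
        using IH edges v W symp_delete_edge[OF E(1)] irreflp_delete_edge[OF E(2)] by blast
      assume "0 < m"
      have "w \<notin> {x\<in>W. \<not> E w x \<and> \<not> E v x}" using v E(1) by (auto dest: sympD)
      then have "edge_count {x\<in>W. \<not> E w x \<and> \<not> E v x} E < edge_count W E"
        using W w v by (intro edge_count_less) auto
      then show "indep_acyclic {x\<in>W. \<not> E w x \<and> \<not> E v x} E (m - 1)"
        using IH edges v \<open>0 < m\<close> W E by simp
    qed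
  qed
qed

section \<open>Domination bounds\<close>

lemma strongly_dominates_delete_edge:
  "strongly_dominates (delete_edge E u v) X Y \<Longrightarrow> strongly_dominates E X Y"
  unfolding strongly_dominates_def delete_edge_def by blast

lemma not_dominated_non_neighbours:
  assumes "finite W" "w \<in> W" "v \<in> W" "0 < m"
    and undom: "\<forall>X\<subseteq>W. card X \<le> 2 * m \<longrightarrow> \<not> strongly_dominates E X W"
    and X: "X \<subseteq> {x\<in>W. \<not> E w x \<and> \<not> E v x}" "card X \<le> 2 * (m - 1)"
  shows "\<not> strongly_dominates E X {x\<in>W. \<not> E w x \<and> \<not> E v x}"
proof
  assume "strongly_dominates E X {x\<in>W. \<not> E w x \<and> \<not> E v x}"
  then have "strongly_dominates E (insert w (insert v X)) W"
    unfolding strongly_dominates_def by blast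
  moreover have "insert w (insert v X) \<subseteq> W" using assms(2,3) X(1) by blast
  moreover have "card (insert w (insert v X)) \<le> 2 * m"
  proof -
    have "finite X" using X(1) assms(1) by (auto intro: finite_subset)
    then have "card (insert w (insert v X)) \<le> card X + 2" by (simp add: card_insert_if)
    then show ?thesis using assms(4) X(2) by linarith
  qed
  ultimately show False using undom by blast
qed

lemma indep_set_not_dominated_non_neighbours:
  assumes "finite W" "indep_set W E S" "w \<in> S" "v \<in> W" "0 < m"
    and undom: "\<forall>X\<subseteq>W. card X \<le> m \<longrightarrow> \<not> strongly_dominates E X S"
    and X: "X \<subseteq> {x\<in>W. \<not> E w x \<and> \<not> E v x}" "card X \<le> m - 1"
  shows "\<not> strongly_dominates E X (S \<inter> {x\<in>W. \<not> E w x \<and> \<not> E v x})"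
proof
  assume "strongly_dominates E X (S \<inter> {x\<in>W. \<not> E w x \<and> \<not> E v x})"
  moreover have "\<not> E w y" if "y \<in> S" for y using assms(2,3) that unfolding indep_set_def by blast
  ultimately have "strongly_dominates E (insert v X) S"
    using assms(2) unfolding strongly_dominates_def indep_set_def by blast
  moreover have "insert v X \<subseteq> W" using assms(4) X(1) by blast
  moreover have "card (insert v X) \<le> m"
  proof -
    have "finite X" using X(1) assms(1) by (auto intro: finite_subset)
    then have "card (insert v X) \<le> card X + 1" by (simp add: card_insert_if)
    then show ?thesis using assms(5) X(2) by linarith
  qed
  ultimately show False using undom by blast
qed

lemma indep_acyclic_if_not_dominated:
  assumes "finite W" "symp E" "irreflp E"
    and "\<And>X. X \<subseteq> W \<Longrightarrow> card X \<le> 2 * m \<Longrightarrow> \<not> strongly_dominates E X W"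
  shows "indep_acyclic W E m"
proof (rule indep_acyclic_induct[where Q = "\<lambda>W E m. \<forall>X\<subseteq>W. card X \<le> 2 * m \<longrightarrow> \<not> strongly_dominates E X W"])
  fix W and E :: "'a \<Rightarrow> 'a \<Rightarrow> bool" and m
  assume undom: "\<forall>X\<subseteq>W. card X \<le> 2 * m \<longrightarrow> \<not> strongly_dominates E X W" and "finite W"
  then obtain w where w: "w \<in> W" unfolding strongly_dominates_def by fastforce
  show "\<exists>w\<in>W. \<forall>v\<in>W. E w v \<longrightarrow>
      (\<forall>X\<subseteq>W. card X \<le> 2 * m \<longrightarrow> \<not> strongly_dominates (delete_edge E w v) X W) \<and>
      (0 < m \<longrightarrow> (\<forall>X\<subseteq>{x\<in>W. \<not> E w x \<and> \<not> E v x}. card X \<le> 2 * (m - 1)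
         \<longrightarrow> \<not> strongly_dominates E X {x\<in>W. \<not> E w x \<and> \<not> E v x}))"
    using w undom not_dominated_non_neighbours[OF \<open>finite W\<close> w _ _ undom]
    by (blast dest: strongly_dominates_delete_edge)
qed (use assms in auto)

lemma indep_acyclic_if_indep_set_not_dominated:
  assumes "finite W" "symp E" "irreflp E" "indep_set W E S"
    and "\<And>X. X \<subseteq> W \<Longrightarrow> card X \<le> m \<Longrightarrow> \<not> strongly_dominates E X S"
  shows "indep_acyclic W E m"
proof (rule indep_acyclic_induct[where Q = "\<lambda>W E m. \<exists>S. indep_set W E S
    \<and> (\<forall>X\<subseteq>W. card X \<le> m \<longrightarrow> \<not> strongly_dominates E X S)"])
  fix W and E :: "'a \<Rightarrow> 'a \<Rightarrow> bool" and m
  assume "\<exists>S. indep_set W E S \<and> (\<forall>X\<subseteq>W. card X \<le> m \<longrightarrow> \<not> strongly_dominates E X S)"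
    and "finite W"
  then obtain S where S: "indep_set W E S"
    and undom: "\<forall>X\<subseteq>W. card X \<le> m \<longrightarrow> \<not> strongly_dominates E X S"
    by blast
  then obtain w where "w \<in> S" unfolding strongly_dominates_def by fastforce
  then have w: "w \<in> W" using S unfolding indep_set_def by auto
  show "\<exists>w\<in>W. \<forall>v\<in>W. E w v \<longrightarrow>
      (\<exists>S. indep_set W (delete_edge E w v) S
         \<and> (\<forall>X\<subseteq>W. card X \<le> m \<longrightarrow> \<not> strongly_dominates (delete_edge E w v) X S)) \<and>
      (0 < m \<longrightarrow> (\<exists>S. indep_set {x\<in>W. \<not> E w x \<and> \<not> E v x} E S
         \<and> (\<forall>X\<subseteq>{x\<in>W. \<not> E w x \<and> \<not> E v x}. card X \<le> m - 1 \<longrightarrow> \<not> strongly_dominates E X S)))"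
  proof (intro bexI[OF _ w] ballI impI conjI)
    fix v assume "v \<in> W" "E w v"
    have "indep_set W (delete_edge E w v) S"
      using S by (rule indep_set_mono) (auto dest: delete_edgeD)
    then show "\<exists>S. indep_set W (delete_edge E w v) S
        \<and> (\<forall>X\<subseteq>W. card X \<le> m \<longrightarrow> \<not> strongly_dominates (delete_edge E w v) X S)"
      using undom by (blast dest: strongly_dominates_delete_edge)
    assume "0 < m"
    have "indep_set {x\<in>W. \<not> E w x \<and> \<not> E v x} E (S \<inter> {x\<in>W. \<not> E w x \<and> \<not> E v x})"
      using S unfolding indep_set_def by blast
    then show "\<exists>S. indep_set {x\<in>W. \<not> E w x \<and> \<not> E v x} E S
        \<and> (\<forall>X\<subseteq>{x\<in>W. \<not> E w x \<and> \<not> E v x}. card X \<le> m - 1 \<longrightarrow> \<not> strongly_dominates E X S)"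
      using indep_set_not_dominated_non_neighbours[OF \<open>finite W\<close> S \<open>w \<in> S\<close> \<open>v \<in> W\<close> \<open>0 < m\<close> undom]
      by blast
  qed
qed (use assms in auto)

lemma strongly_dominates_induced:
  "X \<subseteq> W \<Longrightarrow> Y \<subseteq> W \<Longrightarrow>
    strongly_dominates (\<lambda>x y. x \<in> W \<and> y \<in> W \<and> E x y) X Y \<longleftrightarrow> strongly_dominates E X Y"
  unfolding strongly_dominates_def by blast

lemma tgamma_le_card:
  assumes "X \<subseteq> W" "strongly_dominates E X W"
  shows "tgamma W E \<le> enat (card X)"
  unfolding tgamma_def using assms by (intro INF_lower) (simp add: strongly_dominates_induced)

lemma igamma_le:
  assumes "\<And>S. indep_set W E S \<Longrightarrow> \<exists>X\<subseteq>W. card X \<le> l \<and> strongly_dominates E X S"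
  shows "igamma W E \<le> enat l"
  unfolding igamma_def
proof (rule INF_lower, intro CollectI allI impI)
  fix S assume S: "indep_set W E S"
  then obtain X where X: "X \<subseteq> W" "card X \<le> l" "strongly_dominates E X S" using assms by blast
  moreover have "S \<subseteq> W" using S unfolding indep_set_def by blast
  ultimately have "strongly_dominates (\<lambda>x y. x \<in> W \<and> y \<in> W \<and> E x y) X S"
    using strongly_dominates_induced by blast
  with X show "\<exists>X. X \<subseteq> W \<and> card X \<le> l \<and> strongly_dominates (\<lambda>x y. x \<in> W \<and> y \<in> W \<and> E x y) X S"
    by blast
qed

lemma indep_acyclic_if_tgamma_ge:
  assumes "finite W" "symp E" "irreflp E" "enat (2 * m + 1) \<le> tgamma W E"
  shows "indep_acyclic W E m"
proof (rule indep_acyclic_if_not_dominated[OF assms(1-3)])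
  fix X assume X: "X \<subseteq> W" "card X \<le> 2 * m"
  show "\<not> strongly_dominates E X W"
  proof
    assume "strongly_dominates E X W"
    with X(1) have "tgamma W E \<le> enat (card X)" by (rule tgamma_le_card)
    with assms(4) have "enat (2 * m + 1) \<le> enat (card X)" by (rule order_trans)
    then show False using X(2) by simp
  qed
qed

lemma indep_acyclic_if_igamma_ge:
  assumes "finite W" "symp E" "irreflp E" "enat (m + 1) \<le> igamma W E"
  shows "indep_acyclic W E m"
proof -
  have "\<exists>S. indep_set W E S \<and> (\<forall>X\<subseteq>W. card X \<le> m \<longrightarrow> \<not> strongly_dominates E X S)"
  proof (rule ccontr)
    assume "\<not> ?thesis"
    then have "igamma W E \<le> enat m" by (intro igamma_le) blast
    with assms(4) have "enat (m + 1) \<le> enat m" by (rule order_trans)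
    then show False by simp
  qed
  then show ?thesis using indep_acyclic_if_indep_set_not_dominated[OF assms(1-3)] by blast
qed

section \<open>Independent transversals\<close>

lemma partition_disjoint:
  "is_partition V n P \<Longrightarrow> i < n \<Longrightarrow> j < n \<Longrightarrow> i \<noteq> j \<Longrightarrow> x \<in> P i \<Longrightarrow> x \<notin> P j"
  unfolding is_partition_def by blast

lemma parts_union_mono: "I \<subseteq> J \<Longrightarrow> parts_union P I \<subseteq> parts_union P J"
  unfolding parts_union_def by blast

lemma parts_union_lessThan: "is_partition V n P \<Longrightarrow> parts_union P {..<n} = V"
  unfolding parts_union_def is_partition_def by blast

lemma parts_union_remove:
  assumes "is_partition V n P" "I \<subseteq> {..<n}" "i \<in> I"
  shows "parts_union P (I - {i}) = parts_union P I - P i"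
proof -
  have "x \<notin> P i" if "j \<in> I - {i}" "x \<in> P j" for j x
    using partition_disjoint[OF assms(1)] assms(2,3) that by blast
  then show ?thesis unfolding parts_union_def by blast
qed

lemma indep_transversal_part:
  assumes "indep_transversal V E n P T" "i < n"
  obtains t where "T \<inter> P i = {t}"
  using assms unfolding indep_transversal_def by (meson card_1_singletonE)

lemma indep_transversal_subset: "indep_transversal V E n P T \<Longrightarrow> T \<subseteq> V"
  unfolding indep_transversal_def indep_set_def by blast

lemma indep_transversal_not_subset:
  assumes "indep_transversal V E n P T" "is_partition V n P" "i < n"
  shows "\<not> T \<subseteq> parts_union P ({..<n} - {i})"
proof
  assume "T \<subseteq> parts_union P ({..<n} - {i})"
  moreover obtain t where "T \<inter> P i = {t}" using assms(1,3) by (rule indep_transversal_part)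
  moreover have "parts_union P ({..<n} - {i}) = parts_union P {..<n} - P i"
    using parts_union_remove[OF assms(2)] assms(3) by simp
  ultimately show False using assms(3) by (metis Diff_iff insertCI subsetD Int_iff)
qed

lemma card_transversal_inter_parts_union:
  assumes part: "is_partition V n P" and T: "indep_transversal V E n P T" and I: "I \<subseteq> {..<n}"
  shows "card (T \<inter> parts_union P I) = card I"
proof -
  have "card (T \<inter> parts_union P I) = card (\<Union>i\<in>I. T \<inter> P i)"
    unfolding parts_union_def Int_UN_distrib ..
  also have "\<dots> = (\<Sum>i\<in>I. card (T \<inter> P i))"
  proof (rule card_UN_disjoint)
    show "finite I" using I finite_subset by blast
    show "\<forall>i\<in>I. finite (T \<inter> P i)"
    proof
      fix i assume "i \<in> I"
      then obtain t where "T \<inter> P i = {t}" using T I by (meson indep_transversal_part lessThan_iff subsetD)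
      then show "finite (T \<inter> P i)" by simp
    qed
    show "\<forall>i\<in>I. \<forall>j\<in>I. i \<noteq> j \<longrightarrow> T \<inter> P i \<inter> (T \<inter> P j) = {}"
      using part I unfolding is_partition_def by blast
  qed
  also have "\<dots> = (\<Sum>i\<in>I. 1)"
    by (rule sum.cong) (use T I in \<open>auto simp: indep_transversal_def\<close>)
  also have "\<dots> = card I" by simp
  finally show ?thesis .
qed

lemma facets_eq_image_Diff:
  assumes "X \<subseteq> (\<Union>i\<in>I. A i)" "\<And>i. i \<in> I \<Longrightarrow> \<exists>t. X \<inter> A i = {t}"
  shows "facets X = (\<lambda>i. X - A i) ` I"
proof (rule set_eqI)
  fix \<tau>
  have "(\<exists>x\<in>X. \<tau> = X - {x}) \<longleftrightarrow> (\<exists>i\<in>I. \<tau> = X - A i)"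
  proof
    assume "\<exists>x\<in>X. \<tau> = X - {x}"
    then obtain x i where "x \<in> X" "\<tau> = X - {x}" "i \<in> I" "x \<in> A i" using assms(1) by blast
    moreover obtain t where "X \<inter> A i = {t}" using assms(2) \<open>i \<in> I\<close> by blast
    ultimately have "\<tau> = X - A i" by auto
    then show "\<exists>i\<in>I. \<tau> = X - A i" using \<open>i \<in> I\<close> by blast
  next
    assume "\<exists>i\<in>I. \<tau> = X - A i"
    then obtain i t where "\<tau> = X - A i" "X \<inter> A i = {t}" using assms(2) by blast
    then show "\<exists>x\<in>X. \<tau> = X - {x}" by blast
  qed
  then show "\<tau> \<in> facets X \<longleftrightarrow> \<tau> \<in> (\<lambda>i. X - A i) ` I" unfolding facets_def by blast
qed

lemma facets_transversal_inter_parts_union: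
  assumes part: "is_partition V n P" and T: "indep_transversal V E n P T" and I: "I \<subseteq> {..<n}"
  shows "facets (T \<inter> parts_union P I) = sym_diff_sum (\<lambda>i. {T \<inter> parts_union P (I - {i})}) I"
proof -
  define X where "X = T \<inter> parts_union P I"
  have X_single: "\<exists>t. X \<inter> P i = {t}" if i: "i \<in> I" for i
  proof -
    obtain t where "T \<inter> P i = {t}" using T I i by (meson indep_transversal_part lessThan_iff subsetD)
    moreover have "X \<inter> P i = T \<inter> P i" using i unfolding X_def parts_union_def by blast
    ultimately show ?thesis by blast
  qed
  have remove: "T \<inter> parts_union P (I - {i}) = X - P i" if "i \<in> I" for i
    unfolding X_def using parts_union_remove[OF part I that] by blast
  have "X \<subseteq> (\<Union>i\<in>I. P i)" unfolding X_def parts_union_def by blast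
  then have "facets X = (\<lambda>i. X - P i) ` I" using X_single by (rule facets_eq_image_Diff)
  also have "\<dots> = sym_diff_sum (\<lambda>i. {X - P i}) I"
  proof (rule sym_diff_sum_singletons[symmetric], rule inj_onI)
    fix i j assume ij: "i \<in> I" "j \<in> I" "X - P i = X - P j"
    show "i = j"
    proof (rule ccontr)
      assume "i \<noteq> j"
      obtain t where "X \<inter> P i = {t}" using X_single[OF \<open>i \<in> I\<close>] by blast
      then have "t \<in> X" "t \<in> P i" by auto
      moreover have "t \<notin> P j" using partition_disjoint[OF part _ _ \<open>i \<noteq> j\<close> \<open>t \<in> P i\<close>] ij I by blast
      ultimately show False using ij(3) by blast
    qed
  qed
  also have "\<dots> = sym_diff_sum (\<lambda>i. {T \<inter> parts_union P (I - {i})}) I"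
    by (rule sym_diff_sum_cong) (simp add: remove)
  finally show ?thesis unfolding X_def .
qed

section \<open>Fillings and the parity argument\<close>

definition filling_boundary ::
  "(nat \<Rightarrow> 'a set) \<Rightarrow> 'a set \<Rightarrow> 'a set \<Rightarrow> (nat set \<Rightarrow> 'a set set) \<Rightarrow> nat set \<Rightarrow> 'a set set" where
  "filling_boundary P T T' d J =
     sym_diff (sym_diff_sum (\<lambda>i. d (J - {i})) J) (sym_diff {T \<inter> parts_union P J} {T' \<inter> parts_union P J})"

definition is_filling ::
  "('a \<Rightarrow> 'a \<Rightarrow> bool) \<Rightarrow> (nat \<Rightarrow> 'a set) \<Rightarrow> 'a set \<Rightarrow> 'a set \<Rightarrow> (nat set \<Rightarrow> 'a set set) \<Rightarrow> nat set \<Rightarrow> bool" where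
  "is_filling E P T T' d J \<longleftrightarrow>
     indep_chain (parts_union P J) E (Suc (card J)) (d J) \<and> boundary (d J) = filling_boundary P T T' d J"

lemma filling_boundary_cong:
  assumes "\<And>i. i \<in> J \<Longrightarrow> d (J - {i}) = d' (J - {i})"
  shows "filling_boundary P T T' d J = filling_boundary P T T' d' J"
proof -
  have "sym_diff_sum (\<lambda>i. d (J - {i})) J = sym_diff_sum (\<lambda>i. d' (J - {i})) J"
    by (rule sym_diff_sum_cong) (rule assms)
  then show ?thesis unfolding filling_boundary_def by simp
qed

lemma boundary_filling_boundary:
  assumes part: "is_partition V n P" and T: "indep_transversal V E n P T" "indep_transversal V E n P T'"
    and J: "J \<subseteq> {..<n}" and fill: "\<And>i. i \<in> J \<Longrightarrow> is_filling E P T T' d (J - {i})"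
  shows "boundary (filling_boundary P T T' d J) = {}"
proof -
  have fin_J: "finite J" using J finite_subset by blast
  have fin_d: "\<And>i. i \<in> J \<Longrightarrow> finite (d (J - {i}))" using fill unfolding is_filling_def indep_chain_def by blast
  have "boundary (sym_diff_sum (\<lambda>i. d (J - {i})) J) = sym_diff_sum (\<lambda>i. boundary (d (J - {i}))) J"
    using fin_J fin_d by (rule boundary_sym_diff_sum)
  also have "\<dots> = sym_diff_sum (\<lambda>i. sym_diff (sym_diff_sum (\<lambda>j. d (J - {i} - {j})) (J - {i}))
      (sym_diff {T \<inter> parts_union P (J - {i})} {T' \<inter> parts_union P (J - {i})})) J"
    by (rule sym_diff_sum_cong) (use fill in \<open>simp add: is_filling_def filling_boundary_def\<close>)
  also have "\<dots> = sym_diff (sym_diff_sum (\<lambda>i. sym_diff_sum (\<lambda>j. d (J - {i} - {j})) (J - {i})) J)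
      (sym_diff (sym_diff_sum (\<lambda>i. {T \<inter> parts_union P (J - {i})}) J)
                (sym_diff_sum (\<lambda>i. {T' \<inter> parts_union P (J - {i})}) J))"
    using fin_J by (simp add: sym_diff_sum_sym_diff)
  also have "sym_diff_sum (\<lambda>i. sym_diff_sum (\<lambda>j. d (J - {i} - {j})) (J - {i})) J = {}"
    by (rule sym_diff_sum_symmetric_vanishes[OF fin_J]) (simp add: Diff_insert2[symmetric] insert_commute)
  also have "sym_diff_sum (\<lambda>i. {T \<inter> parts_union P (J - {i})}) J = boundary {T \<inter> parts_union P J}"
    using facets_transversal_inter_parts_union[OF part T(1) J] by simp
  also have "sym_diff_sum (\<lambda>i. {T' \<inter> parts_union P (J - {i})}) J = boundary {T' \<inter> parts_union P J}"
    using facets_transversal_inter_parts_union[OF part T(2) J] by simp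
  finally have "boundary (sym_diff_sum (\<lambda>i. d (J - {i})) J)
      = sym_diff {} (sym_diff (boundary {T \<inter> parts_union P J}) (boundary {T' \<inter> parts_union P J}))" .
  moreover have "finite (sym_diff_sum (\<lambda>i. d (J - {i})) J)"
    using fin_J fin_d by (rule finite_sym_diff_sum)
  ultimately show ?thesis unfolding filling_boundary_def by (simp add: boundary_sym_diff)
qed

lemma indep_chain_filling_boundary:
  assumes part: "is_partition V n P" and T: "indep_transversal V E n P T" "indep_transversal V E n P T'"
    and J: "J \<subseteq> {..<n}" "J \<noteq> {}" and fill: "\<And>i. i \<in> J \<Longrightarrow> is_filling E P T T' d (J - {i})"
  shows "indep_chain (parts_union P J) E (card J) (filling_boundary P T T' d J)"
proof -
  have fin_J: "finite J" using J finite_subset by blast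
  have "indep_chain (parts_union P J) E (card J) (d (J - {i}))" if "i \<in> J" for i
  proof -
    have "card J = Suc (card (J - {i}))" using fin_J that by (rule card_Suc_Diff1[symmetric])
    then show ?thesis
      using fill[OF that] parts_union_mono[of "J - {i}" J P] unfolding is_filling_def
      by (auto intro: indep_chain_mono)
  qed
  then have "indep_chain (parts_union P J) E (card J) (sym_diff_sum (\<lambda>i. d (J - {i})) J)"
    using fin_J sym_diff_sum_subset[of "\<lambda>i. d (J - {i})" J]
    unfolding indep_chain_def by (auto intro: finite_sym_diff_sum)
  moreover have "indep_chain (parts_union P J) E (card J) {X \<inter> parts_union P J}"
    if "indep_transversal V E n P X" for X
    using that card_transversal_inter_parts_union[OF part that J(1)]
    unfolding indep_chain_def indep_transversal_def indep_set_def by auto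
  ultimately show ?thesis unfolding filling_boundary_def using T by (simp add: indep_chain_sym_diff)
qed

lemma filling_step:
  assumes part: "is_partition V n P" and T: "indep_transversal V E n P T" "indep_transversal V E n P T'"
    and J: "J \<subseteq> {..<n}" "J \<noteq> {}" and acyclic: "indep_acyclic (parts_union P J) E (card J)"
    and fill: "\<And>i. i \<in> J \<Longrightarrow> is_filling E P T T' d (J - {i})"
  obtains b where "indep_chain (parts_union P J) E (Suc (card J)) b"
    "boundary b = filling_boundary P T T' d J"
  by (rule indep_acyclicD[OF acyclic le_refl indep_chain_filling_boundary[OF part T J fill]
        boundary_filling_boundary[OF part T J(1) fill]])

lemma fillings_extend:
  assumes part: "is_partition V n P" and T: "indep_transversal V E n P T" "indep_transversal V E n P T'"
    and acyclic: "\<And>I. I \<subseteq> {..<n} \<Longrightarrow> I \<noteq> {} \<Longrightarrow> indep_acyclic (parts_union P I) E (card I)"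
    and d: "\<And>J. J \<subseteq> {..<n} \<Longrightarrow> card J \<le> k \<Longrightarrow> is_filling E P T T' d J"
  obtains d' where "\<And>J. J \<subseteq> {..<n} \<Longrightarrow> card J \<le> Suc k \<Longrightarrow> is_filling E P T T' d' J"
proof -
  define fills where "fills J b \<longleftrightarrow>
    indep_chain (parts_union P J) E (Suc (card J)) b \<and> boundary b = filling_boundary P T T' d J" for J b
  define d' where "d' J = (if card J = Suc k then (SOME b. fills J b) else d J)" for J
  have "is_filling E P T T' d' J" if J: "J \<subseteq> {..<n}" "card J \<le> Suc k" for J
  proof -
    have fin_J: "finite J" using J finite_subset by blast
    have smaller: "card (J - {i}) \<le> k" if "i \<in> J" for i using fin_J J(2) that by simp
    have fill: "is_filling E P T T' d (J - {i})" if "i \<in> J" for i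
      using d J(1) smaller[OF that] by blast
    have "d' (J - {i}) = d (J - {i})" if "i \<in> J" for i
      using smaller[OF that] by (simp add: d'_def)
    then have same_boundary: "filling_boundary P T T' d' J = filling_boundary P T T' d J"
      by (rule filling_boundary_cong)
    show ?thesis
    proof (cases "card J = Suc k")
      case True
      with fin_J have "J \<noteq> {}" by auto
      obtain b where "indep_chain (parts_union P J) E (Suc (card J)) b"
        "boundary b = filling_boundary P T T' d J"
        by (rule filling_step[OF part T J(1) \<open>J \<noteq> {}\<close> acyclic[OF J(1) \<open>J \<noteq> {}\<close>] fill])
      then have "fills J b" unfolding fills_def by blast
      then have "fills J (d' J)" using True someI[of "fills J" b] unfolding d'_def by simp
      then show ?thesis using same_boundary unfolding is_filling_def fills_def by simp
    next
      case False
      then show ?thesis using d J same_boundary unfolding is_filling_def d'_def by simp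
    qed
  qed
  then show ?thesis by (rule that)
qed

lemma fillings_exist:
  assumes part: "is_partition V n P" and T: "indep_transversal V E n P T" "indep_transversal V E n P T'"
    and acyclic: "\<And>I. I \<subseteq> {..<n} \<Longrightarrow> I \<noteq> {} \<Longrightarrow> indep_acyclic (parts_union P I) E (card I)"
  obtains d where "\<And>J. J \<subseteq> {..<n} \<Longrightarrow> is_filling E P T T' d J"
proof -
  have "\<exists>d. \<forall>J\<subseteq>{..<n}. card J \<le> k \<longrightarrow> is_filling E P T T' d J" for k
  proof (induction k)
    case 0
    have "is_filling E P T T' (\<lambda>_. {}) {}"
      unfolding is_filling_def filling_boundary_def parts_union_def by simp
    then show ?case by (metis card_0_eq finite_subset finite_lessThan le_zero_eq)
  next
    case (Suc k)
    then obtain d where "\<And>J. J \<subseteq> {..<n} \<Longrightarrow> card J \<le> k \<Longrightarrow> is_filling E P T T' d J" by blast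
    from fillings_extend[OF part T acyclic this]
    obtain d' where "\<And>J. J \<subseteq> {..<n} \<Longrightarrow> card J \<le> Suc k \<Longrightarrow> is_filling E P T T' d' J" by blast
    then show ?case by blast
  qed
  then obtain d where d: "\<forall>J\<subseteq>{..<n}. card J \<le> n \<longrightarrow> is_filling E P T T' d J" by blast
  show ?thesis
  proof (rule that)
    fix J assume "J \<subseteq> {..<n}"
    then show "is_filling E P T T' d J" using d card_mono[OF finite_lessThan \<open>J \<subseteq> {..<n}\<close>] by simp
  qed
qed

lemma even_card_inter_boundary:
  assumes "finite D" "finite X" "\<And>\<sigma>. \<sigma> \<in> D \<Longrightarrow> even (card (facets \<sigma> \<inter> X))"
  shows "even (card (X \<inter> boundary D))"
proof -
  have "(\<Sum>\<sigma>\<in>D. card {\<tau>\<in>X. \<tau> \<in> facets \<sigma>}) = (\<Sum>\<tau>\<in>X. card {\<sigma>\<in>D. \<tau> \<in> facets \<sigma>})"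
    using assms(1,2) by (rule sum_multicount_gen) simp
  moreover have "even (\<Sum>\<sigma>\<in>D. card {\<tau>\<in>X. \<tau> \<in> facets \<sigma>})"
  proof (rule dvd_sum)
    fix \<sigma> assume "\<sigma> \<in> D"
    moreover have "{\<tau>\<in>X. \<tau> \<in> facets \<sigma>} = facets \<sigma> \<inter> X" by blast
    ultimately show "even (card {\<tau>\<in>X. \<tau> \<in> facets \<sigma>})" using assms(3) by simp
  qed
  moreover have "{\<tau>\<in>X. odd (card {\<sigma>\<in>D. \<tau> \<in> facets \<sigma>})} = X \<inter> boundary D"
    unfolding boundary_def sym_diff_sum_def by blast
  ultimately show ?thesis using even_sum_iff[OF assms(2), of "\<lambda>\<tau>. card {\<sigma>\<in>D. \<tau> \<in> facets \<sigma>}"] by simp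
qed

lemma indep_transversal_exchange:
  assumes part: "is_partition V n P" and \<tau>: "indep_transversal V E n P \<tau>"
    and \<sigma>: "indep_set V E (insert x \<tau>)" and "x \<notin> \<tau>" "j < n" "x \<in> P j" "\<tau> \<inter> P j = {y}"
  shows "indep_transversal V E n P (insert x \<tau> - {y})"
  unfolding indep_transversal_def
proof (intro conjI allI impI)
  show "indep_set V E (insert x \<tau> - {y})" using \<sigma> unfolding indep_set_def by blast
  show "insert x \<tau> - {y} \<subseteq> (\<Union>i<n. P i)" using \<sigma> part unfolding indep_set_def is_partition_def by blast
  fix i assume "i < n"
  show "card ((insert x \<tau> - {y}) \<inter> P i) = 1"
  proof (cases "i = j")
    case True
    then have "(insert x \<tau> - {y}) \<inter> P i = {x}" using assms(4-7) by blast
    then show ?thesis by simp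
  next
    case False
    then have "x \<notin> P i" "y \<notin> P i" using partition_disjoint[OF part \<open>j < n\<close> \<open>i < n\<close>] assms(6,7) by blast+
    then have "(insert x \<tau> - {y}) \<inter> P i = \<tau> \<inter> P i" by blast
    then show ?thesis using \<tau> \<open>i < n\<close> unfolding indep_transversal_def by simp
  qed
qed

text \<open>An independent \<open>(n+1)\<close>-set that has a facet in a union \<open>X\<close> of components of \<open>RG\<close> has exactly
  two: if \<open>\<sigma> - {x}\<close> is a transversal, the part of \<open>x\<close> contains one more vertex \<open>y\<close> of \<open>\<sigma>\<close>, and
  \<open>\<sigma> - {x}\<close>, \<open>\<sigma> - {y}\<close> are the only transversal facets of \<open>\<sigma>\<close>, adjacent in \<open>RG\<close>.\<close>
lemma even_card_facets_inter_RG_closed: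
  assumes part: "is_partition V n P" and \<sigma>: "indep_set V E \<sigma>" "card \<sigma> = Suc n"
    and X: "\<And>\<tau>. \<tau> \<in> X \<Longrightarrow> indep_transversal V E n P \<tau>"
    and closed: "\<And>\<tau> \<tau>'. \<tau> \<in> X \<Longrightarrow> RG_adj V E n P \<tau> \<tau>' \<Longrightarrow> \<tau>' \<in> X"
  shows "even (card (facets \<sigma> \<inter> X))"
proof (cases "facets \<sigma> \<inter> X = {}")
  case False
  then obtain x where x: "x \<in> \<sigma>" "\<sigma> - {x} \<in> X" unfolding facets_def by blast
  define \<tau>0 where "\<tau>0 = \<sigma> - {x}"
  have \<tau>0: "indep_transversal V E n P \<tau>0" using X x(2) unfolding \<tau>0_def by blast
  have \<sigma>_eq: "\<sigma> = insert x \<tau>0" "x \<notin> \<tau>0" using x(1) unfolding \<tau>0_def by auto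
  obtain j where j: "j < n" "x \<in> P j"
    using x(1) \<sigma>(1) part unfolding indep_set_def is_partition_def by blast
  obtain y where y: "\<tau>0 \<inter> P j = {y}" using \<tau>0 j(1) by (rule indep_transversal_part)
  have "y \<in> \<sigma>" "y \<noteq> x" using y \<sigma>_eq by auto
  define \<tau>1 where "\<tau>1 = \<sigma> - {y}"
  have \<tau>1: "indep_transversal V E n P \<tau>1"
    unfolding \<tau>1_def \<sigma>_eq(1) using part \<tau>0 \<sigma>(1)[unfolded \<sigma>_eq(1)] \<sigma>_eq(2) j y
    by (rule indep_transversal_exchange)
  have "\<tau>0 \<union> \<tau>1 = \<sigma>" unfolding \<tau>0_def \<tau>1_def using \<open>y \<noteq> x\<close> by blast
  then have "RG_adj V E n P \<tau>0 \<tau>1" unfolding RG_adj_def using \<tau>0 \<tau>1 \<sigma> by simp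
  then have "\<tau>1 \<in> X" using closed x(2) unfolding \<tau>0_def by blast
  have "facets \<sigma> \<inter> X = {\<tau>0, \<tau>1}"
  proof
    show "{\<tau>0, \<tau>1} \<subseteq> facets \<sigma> \<inter> X"
      using x \<open>y \<in> \<sigma>\<close> \<open>\<tau>1 \<in> X\<close> unfolding \<tau>0_def \<tau>1_def facets_def by blast
    show "facets \<sigma> \<inter> X \<subseteq> {\<tau>0, \<tau>1}"
    proof
      fix \<tau> assume "\<tau> \<in> facets \<sigma> \<inter> X"
      then obtain w where w: "w \<in> \<sigma>" "\<tau> = \<sigma> - {w}" "\<tau> \<in> X" unfolding facets_def by blast
      obtain t where t: "\<tau> \<inter> P j = {t}" using X[OF w(3)] j(1) by (rule indep_transversal_part)
      have "w = x \<or> w = y"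
      proof (rule ccontr)
        assume "\<not> (w = x \<or> w = y)"
        then have "x \<in> \<tau> \<inter> P j" "y \<in> \<tau> \<inter> P j" using w(2) x(1) \<open>y \<in> \<sigma>\<close> j(2) y by auto
        then show False using t \<open>y \<noteq> x\<close> by auto
      qed
      then show "\<tau> \<in> {\<tau>0, \<tau>1}" using w(2) unfolding \<tau>0_def \<tau>1_def by blast
    qed
  qed
  moreover have "\<tau>0 \<noteq> \<tau>1" using \<open>y \<in> \<sigma>\<close> \<open>y \<noteq> x\<close> unfolding \<tau>0_def \<tau>1_def by blast
  ultimately show ?thesis by simp
qed simp

lemma RG_connected_if_indep_acyclic:
  assumes G: "fin_graph V E" and part: "is_partition V n P"
    and acyclic: "\<And>I. I \<subseteq> {..<n} \<Longrightarrow> I \<noteq> {} \<Longrightarrow> indep_acyclic (parts_union P I) E (card I)"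
  shows "RG_connected V E n P"
  unfolding RG_connected_def
proof (intro allI impI, elim conjE)
  fix T T' assume T: "indep_transversal V E n P T" and T': "indep_transversal V E n P T'"
  obtain d where d: "\<And>J. J \<subseteq> {..<n} \<Longrightarrow> is_filling E P T T' d J"
    using fillings_exist[OF part T T' acyclic] by blast
  define S where "S = sym_diff_sum (\<lambda>i. d ({..<n} - {i})) {..<n}"
  define X where "X = {\<tau>. indep_transversal V E n P \<tau> \<and> (RG_adj V E n P)\<^sup>*\<^sup>* T \<tau>}"
  have "T \<inter> V = T" "T' \<inter> V = T'" using T T' by (auto dest: indep_transversal_subset)
  then have D: "indep_chain V E (Suc n) (d {..<n})" "boundary (d {..<n}) = sym_diff S (sym_diff {T} {T'})"
    using d[of "{..<n}"] unfolding is_filling_def filling_boundary_def S_def parts_union_lessThan[OF part]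
    by simp_all
  have "X \<subseteq> Pow V" unfolding X_def using indep_transversal_subset by blast
  moreover have "finite V" using G unfolding fin_graph_def by blast
  ultimately have "finite X" by (rule finite_subset[OF _ finite_Pow_iff[THEN iffD2]])
  have "even (card (X \<inter> boundary (d {..<n})))"
  proof (rule even_card_inter_boundary)
    show "finite (d {..<n})" using D(1) unfolding indep_chain_def by blast
    fix \<sigma> assume "\<sigma> \<in> d {..<n}"
    then have "indep_set V E \<sigma>" "card \<sigma> = Suc n" using D(1) unfolding indep_chain_def by auto
    then show "even (card (facets \<sigma> \<inter> X))"
      by (rule even_card_facets_inter_RG_closed[OF part])
        (auto simp: X_def RG_adj_def intro: rtranclp.rtrancl_into_rtrancl)
  qed (rule \<open>finite X\<close>)
  have not_S: "\<tau> \<notin> S" if "\<tau> \<in> X" for \<tau>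
  proof
    assume "\<tau> \<in> S"
    then obtain i where "i < n" "\<tau> \<in> d ({..<n} - {i})" using sym_diff_sum_subset unfolding S_def by fast
    then have "\<tau> \<subseteq> parts_union P ({..<n} - {i})"
      using d[of "{..<n} - {i}"] unfolding is_filling_def indep_chain_def indep_set_def by blast
    then show False using indep_transversal_not_subset[OF _ part \<open>i < n\<close>] that unfolding X_def by blast
  qed
  show "(RG_adj V E n P)\<^sup>*\<^sup>* T T'"
  proof (rule ccontr)
    assume "\<not> (RG_adj V E n P)\<^sup>*\<^sup>* T T'"
    then have "T \<in> X" "T' \<notin> X" "T \<noteq> T'" unfolding X_def using T by auto
    then have "X \<inter> boundary (d {..<n}) = {T}" unfolding D(2) using not_S by auto
    then show False using \<open>even (card (X \<inter> boundary (d {..<n})))\<close> by simp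
  qed
qed

theorem theorem6p2:
  fixes V :: "'a set" and E :: "'a \<Rightarrow> 'a \<Rightarrow> bool" and n :: nat and P :: "nat \<Rightarrow> 'a set"
  assumes "fin_graph V E"
    and "is_partition V n P"
  shows "((\<forall>I. I \<subseteq> {..<n} \<and> I \<noteq> {} \<longrightarrow>
              tgamma (parts_union P I) E \<ge> enat (2 * card I + 1))
            \<longrightarrow> RG_connected V E n P)
       \<and> ((\<forall>I. I \<subseteq> {..<n} \<and> I \<noteq> {} \<longrightarrow>
              igamma (parts_union P I) E \<ge> enat (card I + 1))
            \<longrightarrow> RG_connected V E n P)"
proof -
  have E: "symp E" "irreflp E" using assms(1) unfolding fin_graph_def symp_def irreflp_def by auto
  have fin: "finite (parts_union P I)" if "I \<subseteq> {..<n}" for I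
    using parts_union_mono[OF that] parts_union_lessThan[OF assms(2)] assms(1)
    unfolding fin_graph_def by (metis finite_subset)
  show ?thesis
  proof (intro conjI impI)
    assume "\<forall>I. I \<subseteq> {..<n} \<and> I \<noteq> {} \<longrightarrow> tgamma (parts_union P I) E \<ge> enat (2 * card I + 1)"
    then show "RG_connected V E n P"
      by (intro RG_connected_if_indep_acyclic[OF assms] indep_acyclic_if_tgamma_ge fin E) auto
  next
    assume "\<forall>I. I \<subseteq> {..<n} \<and> I \<noteq> {} \<longrightarrow> igamma (parts_union P I) E \<ge> enat (card I + 1)"
    then show "RG_connected V E n P"
      by (intro RG_connected_if_indep_acyclic[OF assms] indep_acyclic_if_igamma_ge fin E) auto
  qed
qed

end
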